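(* Let $f$ be a Moufang permutation on an abelian group $(X,+)$ with associated biadditive mapping $\beta$. Then for every integer $i$ and all $x,y\in X$, $$f^{-i}\big(f^i(x)+f^i(y)\big)=x+y+\sum_{k\in I(0,i)}f^{-3k}(\beta(x,y)).$$
   Context: A permutation $f$ of an abelian group $(X,+)$ is a Moufang permutation if the map $\beta(x,y)=f^{-1}(f(x)+f(y))-x-y$ (P1) is symmetric, alternating ($\beta(x,x)=0$) and biadditive, and for all $x,y,z\in X$: (P2) $\beta(\beta(x,y),z)=0$ and (P3) $\beta(f(x),f(y))=f(\beta(f^3(x),y))$; $\beta$ is the associated biadditive mapping. For integers $i,j$, $I(i,j)$ is $\emptyset$ if $i=j$, $\{i,\dots,j-1\}$ if $i<j$, $\{j,\dots,i-1\}$ if $j<i$. *)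

theory Defs
  imports Main
begin

definition fpow :: "('a \<Rightarrow> 'a) \<Rightarrow> int \<Rightarrow> 'a \<Rightarrow> 'a" where
  "fpow f i = (if 0 \<le> i then f ^^ nat i else (inv f) ^^ nat (- i))"

definition Iset :: "int \<Rightarrow> int \<Rightarrow> int set" where
  "Iset i j = (if i = j then {} else if i < j then {i..j-1} else {j..i-1})"

definition mbeta :: "('a::ab_group_add \<Rightarrow> 'a) \<Rightarrow> 'a \<Rightarrow> 'a \<Rightarrow> 'a" where
  "mbeta f x y = inv f (f x + f y) - x - y"

definition moufang_perm :: "('a::ab_group_add \<Rightarrow> 'a) \<Rightarrow> bool" where
  "moufang_perm f \<longleftrightarrow> bij f
     \<and> (\<forall>x y. mbeta f x y = mbeta f y x)
     \<and> (\<forall>x. mbeta f x x = 0)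
     \<and> (\<forall>x y z. mbeta f (x + y) z = mbeta f x z + mbeta f y z)
     \<and> (\<forall>x y z. mbeta f x (y + z) = mbeta f x y + mbeta f x z)
     \<and> (\<forall>x y z. mbeta f (mbeta f x y) z = 0)
     \<and> (\<forall>x y. mbeta f (f x) (f y) = f (mbeta f ((f ^^ 3) x) y))"

end

theory Submission
  imports Defs
begin

text \<open>
  Write \<open>x +\<^sub>i y = f\<^sup>-\<^sup>i (f\<^sup>i x + f\<^sup>i y)\<close>. By the definition of \<open>\<beta>\<close>,
  \<open>x +\<^sub>i\<^sub>+\<^sub>1 y = f\<^sup>-\<^sup>i (f\<^sup>i x + f\<^sup>i y + \<beta>(f\<^sup>i x, f\<^sup>i y))\<close>.
  Combining (P3) with the symmetry of \<open>\<beta>\<close> gives \<open>\<beta>(f a, f b) = f\<^sup>-\<^sup>2 \<beta>(a, b)\<close>,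
  hence \<open>\<beta>(f\<^sup>i x, f\<^sup>i y) = f\<^sup>i (f\<^sup>-\<^sup>3\<^sup>i \<beta>(x, y))\<close>. By (P2) every power of \<open>f\<close> is
  additive against values in the image of \<open>\<beta>\<close> and maps that image to itself, so
  \<open>x +\<^sub>i\<^sub>+\<^sub>1 y = x +\<^sub>i y + f\<^sup>-\<^sup>3\<^sup>i \<beta>(x, y)\<close>. Summing these increments yields the formula;
  for negative \<open>i\<close> the increments are subtracted, which is the same as adding
  them because \<open>\<beta>\<close> is alternating and biadditive, so \<open>2\<beta>(x, y) = 0\<close>.
\<close>

lemma fpow_0 [simp]: "fpow f 0 x = x"
  by (simp add: fpow_def)

lemma fpow_plus_1:
  assumes "bij f"
  shows "fpow f (i + 1) x = f (fpow f i x)"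
proof (cases "0 \<le> i")
  case True
  then have "nat (i + 1) = Suc (nat i)" by simp
  with True show ?thesis by (simp add: fpow_def)
next
  case False
  then consider "i = -1" | "nat (- i) = Suc (nat (- (i + 1)))" "i + 1 < 0" by linarith
  then show ?thesis
    using False assms by cases (simp_all add: fpow_def bij_is_surj surj_f_inv_f)
qed

lemma fpow_minus_1:
  assumes "bij f"
  shows "fpow f (i - 1) x = inv f (fpow f i x)"
  using fpow_plus_1[OF assms, of "i - 1" x] assms by (simp add: bij_is_inj inv_f_f)

lemma fpow_add:
  assumes "bij f"
  shows "fpow f (i + j) x = fpow f i (fpow f j x)"
proof (induction i rule: int_induct[where k = 0])
  case base
  then show ?case by simp
next
  case (step1 i)
  have "fpow f (i + 1 + j) x = fpow f (i + j + 1) x" by (simp add: algebra_simps)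
  with step1 show ?case by (simp add: fpow_plus_1[OF assms])
next
  case (step2 i)
  have "fpow f (i - 1 + j) x = fpow f (i + j - 1) x" by (simp add: algebra_simps)
  with step2 show ?case by (simp add: fpow_minus_1[OF assms])
qed

lemma fpow_neg_fpow: "bij f \<Longrightarrow> fpow f (- i) (fpow f i x) = x"
  using fpow_add[of f "- i" i x] by simp

lemma fpow_fpow_neg: "bij f \<Longrightarrow> fpow f i (fpow f (- i) x) = x"
  using fpow_add[of f i "- i" x] by simp

lemma sum_Iset_0_plus_1:
  fixes t :: "int \<Rightarrow> 'a::ab_group_add"
  assumes "t i + t i = 0"
  shows "(\<Sum>k\<in>Iset 0 (i + 1). t k) = (\<Sum>k\<in>Iset 0 i. t k) + t i"
proof (cases "0 \<le> i")
  case True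
  then have "Iset 0 (i + 1) = insert i (Iset 0 i)" "i \<notin> Iset 0 i" "finite (Iset 0 i)"
    by (auto simp: Iset_def)
  then show ?thesis by (simp add: add.commute)
next
  case False
  then have "Iset 0 i = insert i (Iset 0 (i + 1))" "i \<notin> Iset 0 (i + 1)" "finite (Iset 0 (i + 1))"
    by (auto simp: Iset_def)
  with assms show ?thesis by (simp add: eq_neg_iff_add_eq_0 add.assoc)
qed

locale moufang =
  fixes f :: "'a::ab_group_add \<Rightarrow> 'a"
  assumes moufang_perm: "moufang_perm f"
begin

abbreviation beta :: "'a \<Rightarrow> 'a \<Rightarrow> 'a" where
  "beta \<equiv> mbeta f"

lemma bij: "bij f"
  using moufang_perm by (simp add: moufang_perm_def)

lemma f_inv_apply [simp]: "f (inv f z) = z"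
  using bij by (simp add: bij_is_surj surj_f_inv_f)

lemma inv_f_apply [simp]: "inv f (f z) = z"
  using bij by (simp add: bij_is_inj inv_f_f)

lemma beta_commute: "beta a b = beta b a"
  using moufang_perm unfolding moufang_perm_def by blast

lemma beta_beta_left: "beta (beta a b) c = 0"
  using moufang_perm unfolding moufang_perm_def by blast

lemma beta_add_self: "beta a b + beta a b = 0"
proof -
  have add_left: "beta (u + v) w = beta u w + beta v w"
    and add_right: "beta u (v + w) = beta u v + beta u w"
    and alternating: "beta u u = 0" for u v w
    using moufang_perm by (simp_all add: moufang_perm_def)
  have "0 = beta (a + b) (a + b)" by (simp add: alternating)
  also have "\<dots> = beta a (a + b) + beta b (a + b)" by (rule add_left)
  also have "\<dots> = beta a b + beta b a" by (simp add: add_right alternating)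
  finally show ?thesis using beta_commute[of b a] by simp
qed

lemma beta_f_f_P3: "beta (f a) (f b) = f (beta (f (f (f a))) b)"
proof -
  have "(f ^^ 3) a = f (f (f a))" by (simp add: numeral_3_eq_3)
  with moufang_perm show ?thesis by (simp add: moufang_perm_def)
qed

lemma beta_f_left: "beta (f u) w = f (beta u (f (f w)))"
  using beta_f_f_P3[of "inv f w" u] by (simp add: beta_commute)

lemma beta_f3_left: "beta (f (f (f a))) w = inv f (inv f (inv f (beta a w)))"
proof -
  have "beta (f u) w = f (f (f (beta w (f (f (f (f u)))))))" for u
  proof -
    have "beta (f u) w = f (beta (f (f w)) u)"
      using beta_f_left[of u w] beta_commute[of "f (f w)" u] by simp
    also have "beta (f (f w)) u = f (beta (f w) (f (f u)))" by (rule beta_f_left)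
    also have "beta (f w) (f (f u)) = f (beta w (f (f (f (f u)))))" by (rule beta_f_left)
    finally show ?thesis .
  qed
  from this[of "inv f a"] have "beta a w = f (f (f (beta (f (f (f a))) w)))"
    using beta_commute[of w "f (f (f a))"] by simp
  then show ?thesis by simp
qed

lemma beta_f_f: "beta (f a) (f b) = inv f (inv f (beta a b))"
  by (simp add: beta_f_f_P3 beta_f3_left)

lemma beta_fpow_fpow: "beta (fpow f i a) (fpow f i b) = fpow f (- 2 * i) (beta a b)"
proof (induction i rule: int_induct[where k = 0])
  case base
  then show ?case by simp
next
  case (step1 i)
  have "- 2 * (i + 1) = - 2 * i - 1 - 1" by simp
  with step1 show ?case by (simp only: fpow_plus_1[OF bij] fpow_minus_1[OF bij] beta_f_f)
next
  case (step2 i)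
  have "- 2 * i = - 2 * (i - 1) - 1 - 1" by simp
  then have "fpow f (- 2 * i) (beta a b) = inv f (inv f (fpow f (- 2 * (i - 1)) (beta a b)))"
    by (simp only: fpow_minus_1[OF bij])
  moreover have "fpow f i c = f (fpow f (i - 1) c)" for c
    using fpow_plus_1[OF bij, of "i - 1"] by simp
  ultimately have "inv f (inv f (beta (fpow f (i - 1) a) (fpow f (i - 1) b)))
      = inv f (inv f (fpow f (- 2 * (i - 1)) (beta a b)))"
    using step2 by (simp add: beta_f_f)
  then show ?case by (metis f_inv_apply)
qed

definition beta_image :: "'a set" where
  "beta_image = {beta u v | u v. True}"

lemma beta_in_beta_image [simp]: "beta u v \<in> beta_image"
  by (auto simp: beta_image_def)

lemma beta_image_add_self: "b \<in> beta_image \<Longrightarrow> b + b = 0"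
  by (auto simp: beta_image_def beta_add_self)

text \<open>By (P2), \<open>\<beta>(z, b) = 0\<close>, i.e. \<open>f\<^sup>-\<^sup>1 (f z + f b) = z + b\<close>.\<close>

lemma f_add_beta_image:
  assumes "b \<in> beta_image"
  shows "f (z + b) = f z + f b"
proof -
  from assms obtain u v where "b = beta u v" by (auto simp: beta_image_def)
  then have "beta z b = 0" by (simp add: beta_commute[of z] beta_beta_left)
  then have "inv f (f z + f b) = z + b" by (simp add: mbeta_def algebra_simps)
  then show ?thesis by (metis f_inv_apply)
qed

lemma f_beta_image:
  assumes "b \<in> beta_image"
  shows "f b \<in> beta_image"
proof -
  from assms obtain u v where "b = beta u v" by (auto simp: beta_image_def)
  then have "f b = beta (f (inv f (inv f (inv f u)))) (f v)"
    using beta_f_f_P3[of "inv f (inv f (inv f u))" v] by simp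
  then show ?thesis by simp
qed

lemma inv_f_beta_image:
  assumes "b \<in> beta_image"
  shows "inv f b \<in> beta_image"
proof -
  from assms obtain u v where "b = beta u v" by (auto simp: beta_image_def)
  then have "b = f (beta (f (f u)) (inv f v))"
    using beta_f_f_P3[of "inv f u" "inv f v"] by simp
  then show ?thesis by simp
qed

lemma inv_f_add_beta_image:
  assumes "b \<in> beta_image"
  shows "inv f (z + b) = inv f z + inv f b"
proof -
  have "f (inv f z + inv f b) = z + b"
    using assms by (simp add: f_add_beta_image inv_f_beta_image)
  then show ?thesis by (metis inv_f_apply)
qed

lemma fpow_beta_image: "b \<in> beta_image \<Longrightarrow> fpow f i b \<in> beta_image"
  by (induction i rule: int_induct[where k = 0])
    (simp_all add: fpow_plus_1[OF bij] fpow_minus_1[OF bij] f_beta_image inv_f_beta_image)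

lemma fpow_add_beta_image: "b \<in> beta_image \<Longrightarrow> fpow f i (z + b) = fpow f i z + fpow f i b"
  by (induction i arbitrary: z rule: int_induct[where k = 0])
    (simp_all add: fpow_plus_1[OF bij] fpow_minus_1[OF bij] fpow_beta_image
      f_add_beta_image inv_f_add_beta_image)

definition conj_add :: "int \<Rightarrow> 'a \<Rightarrow> 'a \<Rightarrow> 'a" where
  "conj_add i x y = fpow f (- i) (fpow f i x + fpow f i y)"

lemma conj_add_plus_1:
  "conj_add (i + 1) x y = conj_add i x y + fpow f (- 3 * i) (beta x y)"
proof -
  define a b w where "a = fpow f i x" and "b = fpow f i y"
    and "w = fpow f (- 3 * i) (beta x y)"
  have w: "w \<in> beta_image" by (simp add: w_def fpow_beta_image)
  have "beta a b = fpow f i w"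
    by (simp add: a_def b_def w_def beta_fpow_fpow flip: fpow_add[OF bij])
  moreover have "inv f (f a + f b) = a + b + beta a b"
    by (simp add: mbeta_def)
  moreover have "a + b = fpow f i (conj_add i x y)"
    by (simp add: conj_add_def fpow_fpow_neg[OF bij] a_def b_def)
  ultimately have "inv f (f a + f b) = fpow f i (conj_add i x y + w)"
    by (simp add: fpow_add_beta_image[OF w])
  moreover have "fpow f (- (i + 1)) z = fpow f (- i) (inv f z)" for z
    using fpow_add[OF bij, of "- i" "- 1" z] fpow_minus_1[OF bij, of 0 z] by simp
  ultimately show ?thesis
    by (simp add: conj_add_def fpow_plus_1[OF bij] fpow_neg_fpow[OF bij] a_def b_def w_def)
qed

lemma conj_add_eq_sum:
  "conj_add i x y = x + y + (\<Sum>k\<in>Iset 0 i. fpow f (- 3 * k) (beta x y))"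
proof -
  define t where "t k = fpow f (- 3 * k) (beta x y)" for k
  have t_twice: "t k + t k = 0" for k
    by (simp add: t_def beta_image_add_self fpow_beta_image)
  show ?thesis
  proof (induction i rule: int_induct[where k = 0])
    case base
    then show ?case by (simp add: conj_add_def Iset_def)
  next
    case (step1 i)
    with conj_add_plus_1[of i] sum_Iset_0_plus_1[of t i, OF t_twice] show ?case
      by (simp add: t_def algebra_simps)
  next
    case (step2 i)
    with conj_add_plus_1[of "i - 1"] sum_Iset_0_plus_1[of t "i - 1", OF t_twice] show ?case
      by (simp add: t_def algebra_simps)
  qed
qed

end

theorem mainTheorem12:
  fixes f :: "'a::ab_group_add \<Rightarrow> 'a" and i :: int and x y :: 'a
  assumes "moufang_perm f"
  shows "fpow f (- i) (fpow f i x + fpow f i y)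
         = x + y + (\<Sum>k\<in>Iset 0 i. fpow f (- 3 * k) (mbeta f x y))"
proof -
  interpret moufang f by (rule moufang.intro) (rule assms)
  show ?thesis using conj_add_eq_sum by (simp add: conj_add_def)
qed

end
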